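(* Assume (A1), (A2), and that $\{\gamma_n\}_{n\ge1}$ is a deterministic $[0,1)$-valued non-increasing sequence with $\lim\gamma_n=0$ and $\sum_n\gamma_n^2<\infty$. Then for the linearized Wang–Landau algorithm, almost surely, for all $n\ge0$, $$\|\pi_{\theta_n}d\lambda-\pi_{\theta_{n+1}}d\lambda\|_{TV}\le 2d(d-1)\gamma_{n+1},$$ and for every $N\ge0$ and all $n\ge N$, $$\sup_{x\in\mathsf X}\|P_{\theta_n}(x,\cdot)-P_{\theta_{n+1}}(x,\cdot)\|_{TV}\le 4\Big(1+\frac{1}{1-\sup_{j\ge N}\gamma_{j+1}}\Big)\gamma_{n+1}.$$
   Context: Setting: $(\mathsf X,\mathcal X)$ Polish space with Borel $\sigma$-algebra and $\sigma$-finite reference measure $\lambda$; $\pi$ a probability density w.r.t. $\lambda$; $d\ge2$; $\mathsf X_1,\dots,\mathsf X_d$ a measurable partition of $\mathsf X$; $I(x)=i$ iff $x\in\mathsf X_i$; $\theta_\star(i)=\int_{\mathsf X_i}\pi\,d\lambda$; $\Theta=\{\theta\in(0,1)^d:\sum_i\theta(i)=1\}$; $\pi_\theta(x)=\big(\sum_{i}\theta_\star(i)/\theta(i)\big)^{-1}\sum_{i}\frac{\pi(x)}{\theta(i)}\mathbf 1_{\mathsf X_i}(x)$. $\|\mu\|_{TV}=\sup\{|\mu(f)|:\sup|f|\le1\}$. (A1): $0<\inf\pi\le\sup\pi<\infty$ and $\min_i\theta_\star(i)>0$. (A2): $P_\theta$ is the Metropolis–Hastings kernel with target $\pi_\theta\,d\lambda$,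 symmetric proposal density $q$ w.r.t. $\lambda$ with $\inf_{\mathsf X^2}q>0$, acceptance $1\wedge\pi_\theta(y)/\pi_\theta(x)$. Linearized Wang–Landau algorithm: $X_0\in\mathsf X$, $\theta_0\in\Theta$; $X_{n+1}\sim P_{\theta_n}(X_n,\cdot)$ conditionally on $\mathcal F_n=\sigma(\theta_0,X_0,\dots,X_n)$; $\theta_{n+1}=\theta_n+\gamma_{n+1}H(X_{n+1},\theta_n)$ with $H_i(x,\theta)=\theta(i)(\mathbf 1_{\mathsf X_i}(x)-\theta(I(x)))$. *)

theory Defs
  imports "HOL-Probability.Probability"
begin

text \<open>Partition cells are indexed by 0..d-1; parameters theta are functions nat => real,
  only the values at i < d matter.\<close>

definition cell_index :: "nat \<Rightarrow> (nat \<Rightarrow> 'a set) \<Rightarrow> 'a \<Rightarrow> nat" where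
  "cell_index d Xs x = (THE i. i < d \<and> x \<in> Xs i)"

definition Theta :: "nat \<Rightarrow> (nat \<Rightarrow> real) set" where
  "Theta d = {\<theta>. (\<forall>i<d. 0 < \<theta> i \<and> \<theta> i < 1) \<and> (\<Sum>i<d. \<theta> i) = 1}"

definition theta_star :: "'a measure \<Rightarrow> ('a \<Rightarrow> real) \<Rightarrow> (nat \<Rightarrow> 'a set) \<Rightarrow> nat \<Rightarrow> real" where
  "theta_star lam \<pi> Xs i = (\<integral>x\<in>Xs i. \<pi> x \<partial>lam)"

definition pi_theta :: "nat \<Rightarrow> 'a measure \<Rightarrow> ('a \<Rightarrow> real) \<Rightarrow> (nat \<Rightarrow> 'a set)
    \<Rightarrow> (nat \<Rightarrow> real) \<Rightarrow> 'a \<Rightarrow> real" where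
  "pi_theta d lam \<pi> Xs \<theta> x =
     inverse (\<Sum>i<d. theta_star lam \<pi> Xs i / \<theta> i) * (\<Sum>i<d. \<pi> x / \<theta> i * indicator (Xs i) x)"

definition mh_acc :: "nat \<Rightarrow> 'a measure \<Rightarrow> ('a \<Rightarrow> real) \<Rightarrow> (nat \<Rightarrow> 'a set)
    \<Rightarrow> (nat \<Rightarrow> real) \<Rightarrow> 'a \<Rightarrow> 'a \<Rightarrow> real" where
  "mh_acc d lam \<pi> Xs \<theta> x y = min 1 (pi_theta d lam \<pi> Xs \<theta> y / pi_theta d lam \<pi> Xs \<theta> x)"

text \<open>In particular P_theta(x,A) = mh_op ... (indicator A) x.\<close>
definition mh_op :: "nat \<Rightarrow> 'a measure \<Rightarrow> ('a \<Rightarrow> real) \<Rightarrow> (nat \<Rightarrow> 'a set) \<Rightarrow> ('a \<Rightarrow> 'a \<Rightarrow> real)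
    \<Rightarrow> (nat \<Rightarrow> real) \<Rightarrow> ('a \<Rightarrow> real) \<Rightarrow> 'a \<Rightarrow> real" where
  "mh_op d lam \<pi> Xs q \<theta> f x =
     (\<integral>y. f y * q x y * mh_acc d lam \<pi> Xs \<theta> x y \<partial>lam)
     + f x * (1 - (\<integral>y. q x y * mh_acc d lam \<pi> Xs \<theta> x y \<partial>lam))"

definition tv_dist :: "'a measure \<Rightarrow> 'a measure \<Rightarrow> real" where
  "tv_dist \<mu> \<nu> = (SUP f \<in> {f \<in> borel_measurable \<mu>. \<forall>x. \<bar>f x\<bar> \<le> 1}.
                     \<bar>(\<integral>x. f x \<partial>\<mu>) - (\<integral>x. f x \<partial>\<nu>)\<bar>)"

definition tv_kernel :: "'a measure \<Rightarrow> (('a \<Rightarrow> real) \<Rightarrow> 'a \<Rightarrow> real) \<Rightarrow> (('a \<Rightarrow> real) \<Rightarrow> 'a \<Rightarrow> real)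
    \<Rightarrow> 'a \<Rightarrow> real" where
  "tv_kernel lam P Q x = (SUP f \<in> {f \<in> borel_measurable lam. \<forall>y. \<bar>f y\<bar> \<le> 1}.
                     \<bar>P f x - Q f x\<bar>)"

definition H_wl :: "nat \<Rightarrow> (nat \<Rightarrow> 'a set) \<Rightarrow> nat \<Rightarrow> 'a \<Rightarrow> (nat \<Rightarrow> real) \<Rightarrow> real" where
  "H_wl d Xs i x \<theta> = \<theta> i * (indicator (Xs i) x - \<theta> (cell_index d Xs x))"

definition wl_filtration :: "'w measure \<Rightarrow> nat \<Rightarrow> (nat \<Rightarrow> 'w \<Rightarrow> 'a::topological_space)
    \<Rightarrow> ('w \<Rightarrow> nat \<Rightarrow> real) \<Rightarrow> nat \<Rightarrow> 'w measure" where
  "wl_filtration M d X \<theta>0 n = sigma (space M)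
     ({X k -` A \<inter> space M | k A. k \<le> n \<and> A \<in> sets borel}
      \<union> {(\<lambda>\<omega>. \<theta>0 \<omega> i) -` B \<inter> space M | i B. i < d \<and> B \<in> sets (borel :: real measure)})"

end

theory Submission
  imports Defs
begin

text \<open>Both bounds hold pathwise, for every \<open>\<omega>\<close>. One update multiplies every weight \<open>\<theta>(i)\<close>
  by a factor in \<open>[1 - \<gamma>, 1 + \<gamma>]\<close>, so the normalising constant moves by the same factors and the
  density ratio \<open>\<pi>\<^sub>\<theta>\<^sub>'/\<pi>\<^sub>\<theta>\<close> lies in \<open>[(1-\<gamma>)/(1+\<gamma>), (1+\<gamma>)/(1-\<gamma>)]\<close>; this gives
  \<open>\<parallel>\<pi>\<^sub>\<theta> - \<pi>\<^sub>\<theta>\<^sub>'\<parallel>\<^sub>T\<^sub>V \<le> 4\<gamma> \<le> 2d(d-1)\<gamma>\<close>. The Metropolis--Hastings ratio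
  \<open>\<pi>\<^sub>\<theta>(y)/\<pi>\<^sub>\<theta>(x)\<close> depends on \<open>\<theta>\<close> only through \<open>\<theta>(I x)/\<theta>(I y)\<close>, which changes by a
  factor within \<open>2\<gamma>/(1-\<gamma>)\<close> of 1; integrating against \<open>q(x,\<cdot>)\<close> gives the kernel bound
  \<open>4\<gamma>/(1-\<gamma>)\<close>.\<close>

lemma abs_min_1_diff_le:
  fixes r t :: real
  assumes "0 \<le> r" "0 < t"
  shows "\<bar>min 1 r - min 1 (t * r)\<bar> \<le> \<bar>t - 1\<bar>"
proof (cases "r \<le> 1")
  case True
  have "\<bar>min 1 r - min 1 (t * r)\<bar> \<le> \<bar>r - t * r\<bar>"
    by (simp add: min_def abs_if)
  also have "\<dots> = \<bar>t - 1\<bar> * r"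
  proof -
    have "r - t * r = - ((t - 1) * r)"
      by (simp add: algebra_simps)
    then show ?thesis
      using assms(1) by (simp add: abs_mult)
  qed
  also have "\<dots> \<le> \<bar>t - 1\<bar>"
    using True by (simp add: mult_left_le)
  finally show ?thesis .
next
  case False
  then have "t \<le> t * r"
    using assms(2) by (simp add: mult_le_cancel_left1)
  then show ?thesis
    using False by (simp add: min_def abs_if)
qed

lemma abs_1_minus_le_if_ratio_bounds:
  fixes w g :: real
  assumes "w * (1 - g) \<le> 1 + g" "1 - g \<le> w * (1 + g)" "0 \<le> g" "g \<le> 1/2"
  shows "\<bar>1 - w\<bar> \<le> 4 * g"
proof -
  have "1 + g \<le> (1 + 4 * g) * (1 - g)"
    using mult_nonneg_nonneg[of g "2 - 4 * g"] assms(3,4) by (simp add: algebra_simps)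
  then have "w * (1 - g) \<le> (1 + 4 * g) * (1 - g)"
    using assms(1) by linarith
  then have "w \<le> 1 + 4 * g"
    using assms(4) by (simp add: mult_le_cancel_right)
  moreover have "(1 - 4 * g) * (1 + g) \<le> 1 - g"
    using mult_nonneg_nonneg[of g "2 + 4 * g"] assms(3) by (simp add: algebra_simps)
  then have "(1 - 4 * g) * (1 + g) \<le> w * (1 + g)"
    using assms(2) by linarith
  then have "1 - 4 * g \<le> w"
    using assms(3) by (simp add: mult_le_cancel_right)
  ultimately show ?thesis
    by linarith
qed

lemma probability_density_integrable:
  fixes f :: "'b \<Rightarrow> real"
  assumes "f \<in> borel_measurable M" "\<And>x. 0 \<le> f x" "(\<integral>\<^sup>+x. ennreal (f x) \<partial>M) = 1"
  shows "integrable M f" "(\<integral>x. f x \<partial>M) = 1"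
  using assms integral_eq_nn_integral[of f M] by (auto intro: integrableI_nonneg)

lemma tv_dist_density_le:
  fixes g g' h :: "'b \<Rightarrow> real"
  assumes g: "integrable M g" "integrable M g'" "\<And>x. 0 \<le> g x" "\<And>x. 0 \<le> g' x"
    and h: "integrable M h" "\<And>x. \<bar>g x - g' x\<bar> \<le> h x"
  shows "tv_dist (density M (\<lambda>x. ennreal (g x))) (density M (\<lambda>x. ennreal (g' x)))
    \<le> (\<integral>x. h x \<partial>M)"
  unfolding tv_dist_def
proof (rule cSUP_least)
  have "(\<lambda>_. 0) \<in> {f \<in> borel_measurable (density M (\<lambda>x. ennreal (g x))). \<forall>x. \<bar>f x\<bar> \<le> (1::real)}"
    by simp
  then show "{f \<in> borel_measurable (density M (\<lambda>x. ennreal (g x))). \<forall>x. \<bar>f x\<bar> \<le> (1::real)} \<noteq> {}"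
    by blast
next
  fix f assume "f \<in> {f \<in> borel_measurable (density M (\<lambda>x. ennreal (g x))). \<forall>x. \<bar>f x\<bar> \<le> (1::real)}"
  then have f: "f \<in> borel_measurable M" "\<And>x. \<bar>f x\<bar> \<le> 1"
    by auto
  have bound: "\<bar>u x * f x\<bar> \<le> \<bar>u x\<bar>" for u :: "'b \<Rightarrow> real" and x
    using f(2)[of x] by (simp add: abs_mult mult_left_le)
  have int: "integrable M (\<lambda>x. u x * f x)" if "integrable M u" for u
    by (rule Bochner_Integration.integrable_bound[OF that])
      (use f bound borel_measurable_integrable[OF that] in auto)
  have "(\<integral>x. f x \<partial>density M (\<lambda>x. ennreal (g x))) - (\<integral>x. f x \<partial>density M (\<lambda>x. ennreal (g' x)))
      = (\<integral>x. g x * f x - g' x * f x \<partial>M)"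
    using g f int[OF g(1)] int[OF g(2)] by (simp add: integral_density)
  also have "\<bar>\<dots>\<bar> \<le> (\<integral>x. \<bar>g x * f x - g' x * f x\<bar> \<partial>M)"
    by (rule integral_abs_bound)
  also have "\<dots> \<le> (\<integral>x. h x \<partial>M)"
  proof (rule integral_mono')
    fix x
    have "\<bar>g x * f x - g' x * f x\<bar> = \<bar>(g x - g' x) * f x\<bar>"
      by (simp add: left_diff_distrib)
    also have "\<dots> \<le> h x"
      using bound[of "\<lambda>x. g x - g' x" x] h(2)[of x] by linarith
    finally show "\<bar>g x * f x - g' x * f x\<bar> \<le> h x" .
    then show "0 \<le> h x"
      by linarith
  qed (fact h(1))
  finally show "\<bar>(\<integral>x. f x \<partial>density M (\<lambda>x. ennreal (g x)))
      - (\<integral>x. f x \<partial>density M (\<lambda>x. ennreal (g' x)))\<bar> \<le> (\<integral>x. h x \<partial>M)" .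
qed

lemma abs_integral_weighted_diff_le:
  fixes p h a b :: "'b \<Rightarrow> real"
  assumes meas: "h \<in> borel_measurable M" "a \<in> borel_measurable M" "b \<in> borel_measurable M"
    and p: "integrable M p" "\<And>y. 0 \<le> p y"
    and h: "\<And>y. \<bar>h y\<bar> \<le> 1"
    and ab: "\<And>y. 0 \<le> a y \<and> a y \<le> 1" "\<And>y. 0 \<le> b y \<and> b y \<le> 1" "\<And>y. \<bar>a y - b y\<bar> \<le> k"
  shows "\<bar>(\<integral>y. h y * p y * a y \<partial>M) - (\<integral>y. h y * p y * b y \<partial>M)\<bar> \<le> k * (\<integral>y. p y \<partial>M)"
proof -
  have int: "integrable M (\<lambda>y. h y * p y * c y)"
    if "c \<in> borel_measurable M" "\<And>y. 0 \<le> c y \<and> c y \<le> 1" for c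
  proof (rule Bochner_Integration.integrable_bound[OF p(1)])
    show "AE y in M. norm (h y * p y * c y) \<le> norm (p y)"
    proof (rule AE_I2)
      fix y
      have "\<bar>h y\<bar> * c y \<le> 1"
        using h[of y] that(2)[of y] by (intro mult_le_one) auto
      then have "p y * (\<bar>h y\<bar> * c y) \<le> p y"
        using p(2)[of y] by (simp add: mult_left_le)
      then show "norm (h y * p y * c y) \<le> norm (p y)"
        using p(2)[of y] that(2)[of y] by (simp add: abs_mult ac_simps)
    qed
  qed (use meas p that in auto)
  have "\<bar>(\<integral>y. h y * p y * a y \<partial>M) - (\<integral>y. h y * p y * b y \<partial>M)\<bar>
      = \<bar>\<integral>y. h y * p y * a y - h y * p y * b y \<partial>M\<bar>"
    using int meas ab by simp
  also have "\<dots> \<le> (\<integral>y. \<bar>h y * p y * a y - h y * p y * b y\<bar> \<partial>M)"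
    by (rule integral_abs_bound)
  also have "\<dots> \<le> (\<integral>y. k * p y \<partial>M)"
  proof (rule integral_mono')
    fix y
    have "\<bar>h y * p y * a y - h y * p y * b y\<bar> = \<bar>h y\<bar> * (p y * \<bar>a y - b y\<bar>)"
      using p(2)[of y] by (simp add: abs_mult right_diff_distrib[symmetric] mult.assoc)
    also have "\<dots> \<le> p y * \<bar>a y - b y\<bar>"
      using h[of y] p(2)[of y] by (simp add: mult_left_le_one_le)
    also have "\<dots> \<le> k * p y"
      using mult_left_mono[OF ab(3)[of y] p(2)[of y]] by (simp add: mult.commute)
    finally show "\<bar>h y * p y * a y - h y * p y * b y\<bar> \<le> k * p y" .
    then show "0 \<le> k * p y"
      by linarith
  qed (use p in simp)
  finally show ?thesis
    by simp
qed

lemma le_if_decreasing_from: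
  fixes f :: "nat \<Rightarrow> 'b::order"
  assumes "\<And>j. N \<le> j \<Longrightarrow> f (Suc j) \<le> f j" "N \<le> j"
  shows "f j \<le> f N"
  using assms(2)
proof (induction rule: dec_induct)
  case (step j)
  then show ?case
    using assms(1)[of j] by (metis order_trans)
qed simp

lemma SUP_atLeast_eq_if_decreasing:
  fixes f :: "nat \<Rightarrow> 'b::conditionally_complete_linorder"
  assumes "\<And>j. N \<le> j \<Longrightarrow> f (Suc j) \<le> f j"
  shows "(SUP j\<in>{N..}. f j) = f N"
  using le_if_decreasing_from[of N f, OF assms] by (intro cSup_eq_maximum) auto

lemma divide_1_minus_le:
  fixes g G :: real
  assumes "0 \<le> g" "g \<le> G" "G < 1"
  shows "g / (1 - g) \<le> (1 + 1 / (1 - G)) * g"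
proof -
  have "g / (1 - g) \<le> g / (1 - G)"
    using assms by (intro divide_left_mono) auto
  also have "\<dots> \<le> (1 + 1 / (1 - G)) * g"
    using assms(1) by (simp add: algebra_simps)
  finally show ?thesis .
qed

locale wl_partition =
  fixes d :: nat and Xs :: "nat \<Rightarrow> 'a set"
  assumes d_ge_2: "2 \<le> d"
    and Xs_disjoint: "\<And>i j. i < d \<Longrightarrow> j < d \<Longrightarrow> i \<noteq> j \<Longrightarrow> Xs i \<inter> Xs j = {}"
    and Xs_cover: "(\<Union>i<d. Xs i) = UNIV"
begin

abbreviation I :: "'a \<Rightarrow> nat" where "I \<equiv> cell_index d Xs"

lemma cell_index_eq:
  assumes "i < d" "x \<in> Xs i"
  shows "I x = i"
  unfolding cell_index_def
proof (rule the_equality)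
  show "i < d \<and> x \<in> Xs i"
    using assms ..
  show "j = i" if "j < d \<and> x \<in> Xs j" for j
    using that assms Xs_disjoint[of j i] by blast
qed

lemma cell_index: "I x < d" "x \<in> Xs (I x)"
proof -
  obtain i where "i < d" "x \<in> Xs i"
    using Xs_cover by blast
  then show "I x < d" "x \<in> Xs (I x)"
    using cell_index_eq by auto
qed

lemma sum_indicator_cells: "(\<Sum>i<d. a i * indicator (Xs i) x) = (a (I x) :: real)"
proof -
  have "a i * indicator (Xs i) x = (if i = I x then a i else 0)" if "i < d" for i
  proof (cases "x \<in> Xs i")
    case True
    then show ?thesis
      using cell_index_eq[OF that True] by simp
  next
    case False
    then have "i \<noteq> I x"
      using cell_index(2)[of x] by auto
    then show ?thesis
      using False by simp
  qed
  then have "(\<Sum>i<d. a i * indicator (Xs i) x) = (\<Sum>i<d. if i = I x then a i else 0)"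
    by (intro sum.cong) auto
  also have "\<dots> = a (I x)"
    using cell_index(1) by simp
  finally show ?thesis .
qed

lemma Theta_iff: "\<theta> \<in> Theta d \<longleftrightarrow> (\<forall>i<d. 0 < \<theta> i) \<and> (\<Sum>i<d. \<theta> i) = 1"
proof
  assume "(\<forall>i<d. 0 < \<theta> i) \<and> (\<Sum>i<d. \<theta> i) = 1"
  then have pos: "\<And>i. i < d \<Longrightarrow> 0 < \<theta> i" and sum: "(\<Sum>i<d. \<theta> i) = 1"
    by auto
  have "\<theta> i < 1" if i: "i < d" for i
  proof -
    define j where "j = (if i = 0 then 1 else 0 :: nat)"
    have j: "j < d" "j \<noteq> i"
      using d_ge_2 unfolding j_def by auto
    have "\<theta> i + \<theta> j = (\<Sum>k\<in>{i, j}. \<theta> k)"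
      using j by simp
    also have "\<dots> \<le> (\<Sum>k<d. \<theta> k)"
      using i j pos by (intro sum_mono2) (auto intro: less_imp_le)
    finally show ?thesis
      using sum pos[OF j(1)] by linarith
  qed
  then show "\<theta> \<in> Theta d"
    using pos sum unfolding Theta_def by auto
qed (auto simp: Theta_def)

lemma abs_step_H_wl_le:
  assumes "\<theta> \<in> Theta d" "i < d" "0 \<le> g"
  shows "\<bar>g * H_wl d Xs i x \<theta>\<bar> \<le> g * \<theta> i"
proof -
  have "0 < \<theta> (I x)" "\<theta> (I x) < 1" "0 < \<theta> i"
    using assms(1,2) cell_index(1) unfolding Theta_def by auto
  then have "\<theta> i * \<bar>indicator (Xs i) x - \<theta> (I x)\<bar> \<le> \<theta> i"
    by (intro mult_left_le) (auto simp: indicator_def)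
  then show ?thesis
    using assms(3) \<open>0 < \<theta> i\<close> unfolding H_wl_def by (simp add: abs_mult mult_left_mono)
qed

lemma sum_H_wl:
  assumes "(\<Sum>i<d. \<theta> i) = 1"
  shows "(\<Sum>i<d. H_wl d Xs i x \<theta>) = 0"
proof -
  have "(\<Sum>i<d. H_wl d Xs i x \<theta>)
      = (\<Sum>i<d. \<theta> i * indicator (Xs i) x) - \<theta> (I x) * (\<Sum>i<d. \<theta> i)"
    unfolding H_wl_def right_diff_distrib sum_subtractf sum_distrib_left
    by (simp add: ac_simps)
  then show ?thesis
    using assms by (simp add: sum_indicator_cells)
qed

lemma Theta_H_wl_update:
  assumes "\<theta> \<in> Theta d" "0 \<le> g" "g < 1"
    and "\<And>i. i < d \<Longrightarrow> \<theta>' i = \<theta> i + g * H_wl d Xs i x \<theta>"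
  shows "\<theta>' \<in> Theta d"
  unfolding Theta_iff
proof
  show "\<forall>i<d. 0 < \<theta>' i"
  proof (intro allI impI)
    fix i assume i: "i < d"
    have "0 < \<theta> i"
      using assms(1) i unfolding Theta_def by auto
    then have "g * \<theta> i < \<theta> i"
      using assms(3) by simp
    then show "0 < \<theta>' i"
      using abs_step_H_wl_le[OF assms(1) i assms(2), of x] assms(4)[OF i] by linarith
  qed
  have "(\<Sum>i<d. \<theta>' i) = (\<Sum>i<d. \<theta> i) + g * (\<Sum>i<d. H_wl d Xs i x \<theta>)"
    using assms(4) by (simp add: sum.distrib sum_distrib_left)
  then show "(\<Sum>i<d. \<theta>' i) = 1"
    using assms(1) sum_H_wl unfolding Theta_iff by simp
qed

end

locale wl_model = wl_partition d Xs
  for d :: nat and Xs :: "nat \<Rightarrow> 'a set" +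
  fixes lam :: "'a measure" and \<pi> :: "'a \<Rightarrow> real" and q :: "'a \<Rightarrow> 'a \<Rightarrow> real"
  assumes Xs_sets: "\<And>i. i < d \<Longrightarrow> Xs i \<in> sets lam"
    and pi_pos: "\<And>x. 0 < \<pi> x"
    and pi_integrable: "integrable lam \<pi>"
    and theta_star_pos: "\<And>i. i < d \<Longrightarrow> 0 < theta_star lam \<pi> Xs i"
    and q_nonneg: "\<And>x y. 0 \<le> q x y"
    and q_integrable: "\<And>x. integrable lam (q x)"
    and q_integral: "\<And>x. (\<integral>y. q x y \<partial>lam) = 1"
begin

abbreviation Z :: "(nat \<Rightarrow> real) \<Rightarrow> real" where
  "Z \<theta> \<equiv> \<Sum>i<d. theta_star lam \<pi> Xs i / \<theta> i"

abbreviation pi_th :: "(nat \<Rightarrow> real) \<Rightarrow> 'a \<Rightarrow> real" where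
  "pi_th \<equiv> pi_theta d lam \<pi> Xs"

abbreviation acc :: "(nat \<Rightarrow> real) \<Rightarrow> 'a \<Rightarrow> 'a \<Rightarrow> real" where
  "acc \<equiv> mh_acc d lam \<pi> Xs"

lemma Z_pos: "(\<And>i. i < d \<Longrightarrow> 0 < \<theta> i) \<Longrightarrow> 0 < Z \<theta>"
  using d_ge_2 theta_star_pos by (intro sum_pos) (auto simp: lessThan_empty_iff)

lemma pi_theta_eq: "pi_th \<theta> x = \<pi> x / (\<theta> (I x) * Z \<theta>)"
  unfolding pi_theta_def using sum_indicator_cells[of "\<lambda>i. \<pi> x / \<theta> i" x]
  by (simp add: divide_inverse ac_simps)

lemma pi_theta_pos:
  assumes "\<And>i. i < d \<Longrightarrow> 0 < \<theta> i"
  shows "0 < pi_th \<theta> x"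
  using pi_pos[of x] Z_pos[of \<theta>, OF assms] assms[OF cell_index(1)] by (simp add: pi_theta_eq)

lemma pi_theta_measurable: "pi_th \<theta> \<in> borel_measurable lam"
  unfolding pi_theta_def using pi_integrable Xs_sets by measurable

lemma has_bochner_integral_cell:
  assumes "i < d"
  shows "has_bochner_integral lam (\<lambda>x. \<pi> x / \<theta> i * indicator (Xs i) x)
    (theta_star lam \<pi> Xs i / \<theta> i)"
proof -
  have "has_bochner_integral lam (\<lambda>x. indicator (Xs i) x *\<^sub>R \<pi> x) (theta_star lam \<pi> Xs i)"
    unfolding theta_star_def set_lebesgue_integral_def
    using assms by (intro has_bochner_integral_integrable integrable_mult_indicator Xs_sets pi_integrable)
  then have "has_bochner_integral lam (\<lambda>x. indicator (Xs i) x *\<^sub>R \<pi> x / \<theta> i)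
      (theta_star lam \<pi> Xs i / \<theta> i)"
    by (rule has_bochner_integral_divide_zero)
  moreover have "(\<lambda>x. indicator (Xs i) x *\<^sub>R \<pi> x / \<theta> i) = (\<lambda>x. \<pi> x / \<theta> i * indicator (Xs i) x)"
    by (auto simp: fun_eq_iff)
  ultimately show ?thesis
    by simp
qed

lemma integrable_pi_theta: "integrable lam (pi_th \<theta>)"
  unfolding pi_theta_def
  using has_bochner_integral_cell[THEN integrable.intros]
  by (intro integrable_mult_right Bochner_Integration.integrable_sum) auto

lemma integral_pi_theta:
  assumes "\<And>i. i < d \<Longrightarrow> 0 < \<theta> i"
  shows "(\<integral>x. pi_th \<theta> x \<partial>lam) = 1"
proof -
  have "(\<integral>x. pi_th \<theta> x \<partial>lam)
      = inverse (Z \<theta>) * (\<Sum>i<d. \<integral>x. \<pi> x / \<theta> i * indicator (Xs i) x \<partial>lam)"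
    unfolding pi_theta_def using has_bochner_integral_cell[THEN integrable.intros]
    by (simp add: Bochner_Integration.integral_sum)
  also have "\<dots> = inverse (Z \<theta>) * Z \<theta>"
    using has_bochner_integral_cell[THEN has_bochner_integral_integral_eq]
    by (intro arg_cong[where f = "\<lambda>s. inverse (Z \<theta>) * s"] sum.cong) auto
  also have "\<dots> = 1"
    using Z_pos[of \<theta>, OF assms] by simp
  finally show ?thesis .
qed

lemma mh_acc_measurable: "acc \<theta> x \<in> borel_measurable lam"
  unfolding mh_acc_def using pi_theta_measurable by measurable

lemma mh_acc_bounds: "(\<And>i. i < d \<Longrightarrow> 0 < \<theta> i) \<Longrightarrow> 0 \<le> acc \<theta> x y \<and> acc \<theta> x y \<le> 1"
  unfolding mh_acc_def using pi_theta_pos[of \<theta> x] pi_theta_pos[of \<theta> y] by simp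

end

locale wl_step = wl_model d Xs lam \<pi> q
  for d :: nat and Xs :: "nat \<Rightarrow> 'a set" and lam :: "'a measure" and \<pi> q +
  fixes g :: real and \<theta> \<theta>' :: "nat \<Rightarrow> real"
  assumes theta_pos: "\<And>i. i < d \<Longrightarrow> 0 < \<theta> i"
    and step_le: "\<And>i. i < d \<Longrightarrow> \<bar>\<theta>' i - \<theta> i\<bar> \<le> g * \<theta> i"
    and g_nonneg: "0 \<le> g"
    and g_less_1: "g < 1"
begin

lemma step_ratio_bounds:
  assumes "i < d"
  shows "1 - g \<le> \<theta>' i / \<theta> i" "\<theta>' i / \<theta> i \<le> 1 + g"
  using step_le[OF assms] theta_pos[OF assms] by (auto simp: field_simps abs_le_iff)

lemma theta'_pos:
  assumes "i < d"
  shows "0 < \<theta>' i"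
proof -
  have "0 < \<theta>' i / \<theta> i"
    using step_ratio_bounds(1)[OF assms] g_less_1 by linarith
  then show ?thesis
    using theta_pos[OF assms] by (simp add: zero_less_divide_iff)
qed

lemma Z_step_bounds: "Z \<theta> \<le> (1 + g) * Z \<theta>'" "(1 - g) * Z \<theta>' \<le> Z \<theta>"
proof -
  have cell: "theta_star lam \<pi> Xs i / \<theta> i = theta_star lam \<pi> Xs i / \<theta>' i * (\<theta>' i / \<theta> i)"
    and nonneg: "0 \<le> theta_star lam \<pi> Xs i / \<theta>' i" if "i < d" for i
    using theta_pos[OF that] theta'_pos[OF that] theta_star_pos[OF that] by simp_all
  show "Z \<theta> \<le> (1 + g) * Z \<theta>'"
    unfolding sum_distrib_left
  proof (rule sum_mono)
    fix i assume "i \<in> {..<d}"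
    then have i: "i < d"
      by simp
    show "theta_star lam \<pi> Xs i / \<theta> i \<le> (1 + g) * (theta_star lam \<pi> Xs i / \<theta>' i)"
      unfolding cell[OF i] using mult_left_mono[OF step_ratio_bounds(2)[OF i] nonneg[OF i]]
      by (simp add: mult.commute)
  qed
  show "(1 - g) * Z \<theta>' \<le> Z \<theta>"
    unfolding sum_distrib_left
  proof (rule sum_mono)
    fix i assume "i \<in> {..<d}"
    then have i: "i < d"
      by simp
    show "(1 - g) * (theta_star lam \<pi> Xs i / \<theta>' i) \<le> theta_star lam \<pi> Xs i / \<theta> i"
      unfolding cell[OF i] using mult_left_mono[OF step_ratio_bounds(1)[OF i] nonneg[OF i]]
      by (simp add: mult.commute)
  qed
qed

lemma pi_theta_step_ratio_bounds:
  fixes x :: 'a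
  defines "w \<equiv> pi_th \<theta>' x / pi_th \<theta> x"
  shows "w * (1 - g) \<le> 1 + g" "1 - g \<le> w * (1 + g)"
proof -
  define s where "s = \<theta>' (I x) / \<theta> (I x)"
  have c: "I x < d"
    by (rule cell_index)
  have Z: "0 < Z \<theta>" "0 < Z \<theta>'"
    using Z_pos[of \<theta>, OF theta_pos] Z_pos[of \<theta>', OF theta'_pos] by auto
  have s: "1 - g \<le> s" "s \<le> 1 + g"
    using step_ratio_bounds[OF c] unfolding s_def by auto
  have w: "0 \<le> w"
    unfolding w_def using pi_theta_pos[of \<theta>, OF theta_pos] pi_theta_pos[of \<theta>', OF theta'_pos] by (simp add: less_imp_le)
  have ws: "w * s = Z \<theta> / Z \<theta>'"
    unfolding w_def s_def pi_theta_eq using theta_pos[OF c] theta'_pos[OF c] Z pi_pos[of x]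
    by (simp add: field_simps)
  have "w * (1 - g) \<le> w * s"
    using s w by (simp add: mult_left_mono)
  also have "\<dots> \<le> 1 + g"
    unfolding ws using Z_step_bounds(1) Z by (simp add: divide_le_eq mult.commute)
  finally show "w * (1 - g) \<le> 1 + g" .
  have "1 - g \<le> w * s"
    unfolding ws using Z_step_bounds(2) Z by (simp add: le_divide_eq)
  also have "\<dots> \<le> w * (1 + g)"
    using s w by (simp add: mult_left_mono)
  finally show "1 - g \<le> w * (1 + g)" .
qed

lemma tv_dist_pi_theta_step_le:
  "tv_dist (density lam (\<lambda>x. ennreal (pi_th \<theta> x))) (density lam (\<lambda>x. ennreal (pi_th \<theta>' x)))
    \<le> 4 * g"
proof -
  have p: "0 < pi_th \<theta> x" "0 < pi_th \<theta>' x" for x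
    using pi_theta_pos[of \<theta>, OF theta_pos] pi_theta_pos[of \<theta>', OF theta'_pos] by auto
  show ?thesis
  proof (cases "g \<le> 1/2")
    case True
    have "tv_dist (density lam (\<lambda>x. ennreal (pi_th \<theta> x))) (density lam (\<lambda>x. ennreal (pi_th \<theta>' x)))
        \<le> (\<integral>x. 4 * g * pi_th \<theta> x \<partial>lam)"
    proof (rule tv_dist_density_le)
      fix x
      define w where "w = pi_th \<theta>' x / pi_th \<theta> x"
      have "pi_th \<theta> x - pi_th \<theta>' x = (1 - w) * pi_th \<theta> x"
        unfolding w_def using p[of x] by (simp add: field_simps)
      then have "\<bar>pi_th \<theta> x - pi_th \<theta>' x\<bar> = \<bar>1 - w\<bar> * pi_th \<theta> x"
        using p[of x] by (simp add: abs_mult)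
      also have "\<dots> \<le> 4 * g * pi_th \<theta> x"
        using abs_1_minus_le_if_ratio_bounds[OF pi_theta_step_ratio_bounds[of x, folded w_def]
            g_nonneg True] p[of x]
        by (simp add: mult_right_mono)
      finally show "\<bar>pi_th \<theta> x - pi_th \<theta>' x\<bar> \<le> 4 * g * pi_th \<theta> x" .
    qed (use integrable_pi_theta p in \<open>auto intro: less_imp_le\<close>)
    also have "\<dots> = 4 * g"
      using integral_pi_theta[of \<theta>, OF theta_pos] by simp
    finally show ?thesis .
  next
    case False
    have "tv_dist (density lam (\<lambda>x. ennreal (pi_th \<theta> x))) (density lam (\<lambda>x. ennreal (pi_th \<theta>' x)))
        \<le> (\<integral>x. pi_th \<theta> x + pi_th \<theta>' x \<partial>lam)"
    proof (rule tv_dist_density_le)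
      fix x
      show "\<bar>pi_th \<theta> x - pi_th \<theta>' x\<bar> \<le> pi_th \<theta> x + pi_th \<theta>' x"
        unfolding abs_le_iff using p[of x] by linarith
    qed (use integrable_pi_theta p in \<open>auto intro: less_imp_le\<close>)
    also have "\<dots> = 2"
      using integral_pi_theta[of \<theta>, OF theta_pos] integral_pi_theta[of \<theta>', OF theta'_pos] integrable_pi_theta
      by simp
    finally show ?thesis
      using False by linarith
  qed
qed

lemma mh_acc_step:
  "acc \<theta>' x y
    = min 1 ((\<theta>' (I x) / \<theta> (I x)) / (\<theta>' (I y) / \<theta> (I y)) * (pi_th \<theta> y / pi_th \<theta> x))"
proof -
  have "0 < \<theta> (I x)" "0 < \<theta> (I y)" "0 < \<theta>' (I x)" "0 < \<theta>' (I y)" "0 < Z \<theta>" "0 < Z \<theta>'"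
    using theta_pos theta'_pos cell_index(1) Z_pos[of \<theta>, OF theta_pos] Z_pos[of \<theta>', OF theta'_pos] by auto
  then show ?thesis
    unfolding mh_acc_def pi_theta_eq using pi_pos[of x] pi_pos[of y]
    by (intro arg_cong[where f = "min 1"]) (simp add: field_simps)
qed

lemma abs_mh_acc_step_le: "\<bar>acc \<theta> x y - acc \<theta>' x y\<bar> \<le> 2 * g / (1 - g)"
proof -
  define sx where "sx = \<theta>' (I x) / \<theta> (I x)"
  define sy where "sy = \<theta>' (I y) / \<theta> (I y)"
  have s: "1 - g \<le> sx" "sx \<le> 1 + g" "1 - g \<le> sy" "sy \<le> 1 + g"
    using step_ratio_bounds cell_index(1) unfolding sx_def sy_def by auto
  then have "0 < sy" "0 < sx / sy"
    using g_less_1 by auto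
  have "\<bar>acc \<theta> x y - acc \<theta>' x y\<bar>
      = \<bar>min 1 (pi_th \<theta> y / pi_th \<theta> x) - min 1 (sx / sy * (pi_th \<theta> y / pi_th \<theta> x))\<bar>"
    unfolding mh_acc_step sx_def sy_def by (simp add: mh_acc_def)
  also have "\<dots> \<le> \<bar>sx / sy - 1\<bar>"
    using pi_theta_pos[of \<theta>, OF theta_pos] \<open>0 < sx / sy\<close> by (intro abs_min_1_diff_le) (auto intro: less_imp_le)
  also have "\<dots> = \<bar>sx - sy\<bar> / sy"
    using \<open>0 < sy\<close> by (simp add: field_simps)
  also have "\<dots> \<le> 2 * g / (1 - g)"
    using s g_nonneg g_less_1 by (intro frac_le) auto
  finally show ?thesis .
qed

lemma tv_kernel_mh_step_le:
  "tv_kernel lam (mh_op d lam \<pi> Xs q \<theta>) (mh_op d lam \<pi> Xs q \<theta>') x \<le> 4 * g / (1 - g)"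
  unfolding tv_kernel_def
proof (rule cSUP_least)
  have "(\<lambda>_. 0) \<in> {f \<in> borel_measurable lam. \<forall>y. \<bar>f y\<bar> \<le> (1::real)}"
    by simp
  then show "{f \<in> borel_measurable lam. \<forall>y. \<bar>f y\<bar> \<le> (1::real)} \<noteq> {}"
    by blast
next
  fix f assume "f \<in> {f \<in> borel_measurable lam. \<forall>y. \<bar>f y\<bar> \<le> (1::real)}"
  then have f: "f \<in> borel_measurable lam" "\<And>y. \<bar>f y\<bar> \<le> 1"
    by auto
  define k where "k = 2 * g / (1 - g)"
  have weighted: "\<bar>(\<integral>y. h y * q x y * acc \<theta> x y \<partial>lam) - (\<integral>y. h y * q x y * acc \<theta>' x y \<partial>lam)\<bar> \<le> k"
    if "h \<in> borel_measurable lam" "\<And>y. \<bar>h y\<bar> \<le> 1" for h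
  proof -
    have "\<bar>(\<integral>y. h y * q x y * acc \<theta> x y \<partial>lam) - (\<integral>y. h y * q x y * acc \<theta>' x y \<partial>lam)\<bar>
        \<le> k * (\<integral>y. q x y \<partial>lam)"
      unfolding k_def
      using that mh_acc_measurable q_integrable q_nonneg mh_acc_bounds[of \<theta>, OF theta_pos]
        mh_acc_bounds[of \<theta>', OF theta'_pos] abs_mh_acc_step_le
      by (intro abs_integral_weighted_diff_le) auto
    then show ?thesis
      using q_integral by simp
  qed
  let ?A = "(\<integral>y. f y * q x y * acc \<theta> x y \<partial>lam) - (\<integral>y. f y * q x y * acc \<theta>' x y \<partial>lam)"
  let ?B = "(\<integral>y. q x y * acc \<theta> x y \<partial>lam) - (\<integral>y. q x y * acc \<theta>' x y \<partial>lam)"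
  have "mh_op d lam \<pi> Xs q \<theta> f x - mh_op d lam \<pi> Xs q \<theta>' f x = ?A - f x * ?B"
    unfolding mh_op_def by (simp add: algebra_simps)
  then have "\<bar>mh_op d lam \<pi> Xs q \<theta> f x - mh_op d lam \<pi> Xs q \<theta>' f x\<bar> \<le> \<bar>?A\<bar> + \<bar>f x\<bar> * \<bar>?B\<bar>"
    using abs_triangle_ineq4[of ?A "f x * ?B"] by (simp add: abs_mult)
  also have "\<dots> \<le> k + 1 * k"
    using weighted[OF f] weighted[of "\<lambda>_. 1"] f(2)[of x] unfolding k_def
    by (intro add_mono mult_mono) (auto simp: g_less_1 g_nonneg)
  also have "\<dots> = 4 * g / (1 - g)"
    unfolding k_def by simp
  finally show "\<bar>mh_op d lam \<pi> Xs q \<theta> f x - mh_op d lam \<pi> Xs q \<theta>' f x\<bar> \<le> 4 * g / (1 - g)" .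
qed

end

lemma wl_model_if_densities:
  fixes lam :: "'a::topological_space measure"
  assumes lam_borel: "sets lam = sets borel"
    and pi: "\<pi> \<in> borel_measurable lam" "\<And>x. 0 \<le> \<pi> x" "(\<integral>\<^sup>+x. ennreal (\<pi> x) \<partial>lam) = 1"
    and partition: "2 \<le> d" "\<And>i. i < d \<Longrightarrow> Xs i \<in> sets borel"
      "\<And>i j. i < d \<Longrightarrow> j < d \<Longrightarrow> i \<noteq> j \<Longrightarrow> Xs i \<inter> Xs j = {}" "(\<Union>i<d. Xs i) = UNIV"
    and pi_lower: "\<exists>c>0. \<forall>x. c \<le> \<pi> x"
    and theta_star_pos: "\<And>i. i < d \<Longrightarrow> 0 < theta_star lam \<pi> Xs i"
    and q: "case_prod q \<in> borel_measurable (lam \<Otimes>\<^sub>M lam)" "\<And>x y. 0 \<le> q x y"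
      "\<And>x. (\<integral>\<^sup>+y. ennreal (q x y) \<partial>lam) = 1"
  shows "wl_model d Xs lam \<pi> q"
proof -
  have "q x \<in> borel_measurable lam" for x
    using measurable_Pair2[OF q(1), of x] sets_eq_imp_space_eq[OF lam_borel] by simp
  then have "integrable lam (q x)" "(\<integral>y. q x y \<partial>lam) = 1" for x
    by (rule probability_density_integrable[OF _ q(2)[of x] q(3)[of x]])+
  moreover have "0 < \<pi> x" for x
    using pi_lower by (auto intro: less_le_trans)
  ultimately show ?thesis
    using partition lam_borel theta_star_pos q(2) probability_density_integrable(1)[OF pi]
    by unfold_locales auto
qed

locale wl_path = wl_model d Xs lam \<pi> q
  for d :: nat and Xs :: "nat \<Rightarrow> 'a set" and lam :: "'a measure" and \<pi> q +
  fixes \<gamma> :: "nat \<Rightarrow> real" and \<theta> :: "nat \<Rightarrow> nat \<Rightarrow> real" and X :: "nat \<Rightarrow> 'a"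
  assumes theta_0: "\<theta> 0 \<in> Theta d"
    and gamma_range: "\<And>n. 0 \<le> \<gamma> (Suc n) \<and> \<gamma> (Suc n) < 1"
    and theta_Suc: "\<And>n i. i < d \<Longrightarrow> \<theta> (Suc n) i = \<theta> n i + \<gamma> (Suc n) * H_wl d Xs i (X (Suc n)) (\<theta> n)"
begin

lemma theta_in_Theta: "\<theta> n \<in> Theta d"
proof (induction n)
  case (Suc n)
  show ?case
    using gamma_range[of n] theta_Suc by (intro Theta_H_wl_update[OF Suc]) auto
qed (fact theta_0)

lemma wl_step_Suc: "wl_step d Xs lam \<pi> q (\<gamma> (Suc n)) (\<theta> n) (\<theta> (Suc n))"
proof (intro wl_step.intro wl_step_axioms.intro)
  show "wl_model d Xs lam \<pi> q"
    by (fact wl_model_axioms)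
  show "0 < \<theta> n i" if "i < d" for i
    using theta_in_Theta[of n] that unfolding Theta_def by auto
  show "\<bar>\<theta> (Suc n) i - \<theta> n i\<bar> \<le> \<gamma> (Suc n) * \<theta> n i" if "i < d" for i
    using abs_step_H_wl_le[OF theta_in_Theta that] theta_Suc[OF that] gamma_range[of n] by simp
qed (use gamma_range in auto)

lemma tv_dist_pi_theta_Suc_le:
  "tv_dist (density lam (\<lambda>x. ennreal (pi_th (\<theta> n) x))) (density lam (\<lambda>x. ennreal (pi_th (\<theta> (Suc n)) x)))
    \<le> 4 * \<gamma> (Suc n)"
  by (rule wl_step.tv_dist_pi_theta_step_le[OF wl_step_Suc])

lemma SUP_tv_kernel_mh_Suc_le:
  "(SUP x\<in>UNIV. tv_kernel lam (mh_op d lam \<pi> Xs q (\<theta> n)) (mh_op d lam \<pi> Xs q (\<theta> (Suc n))) x)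
    \<le> 4 * \<gamma> (Suc n) / (1 - \<gamma> (Suc n))"
  using wl_step.tv_kernel_mh_step_le[OF wl_step_Suc] by (intro cSUP_least) auto

end

theorem mainTheorem14:
  fixes lam :: "'a::polish_space measure"
    and \<pi> :: "'a \<Rightarrow> real"
    and d :: nat
    and Xs :: "nat \<Rightarrow> 'a set"
    and q :: "'a \<Rightarrow> 'a \<Rightarrow> real"
    and \<gamma> :: "nat \<Rightarrow> real"
    and M :: "'w measure"
    and X :: "nat \<Rightarrow> 'w \<Rightarrow> 'a"
    and \<theta> :: "nat \<Rightarrow> 'w \<Rightarrow> nat \<Rightarrow> real"
  assumes lam_borel: "sets lam = sets borel"
    and lam_sf: "sigma_finite_measure lam"
    and pi_meas: "\<pi> \<in> borel_measurable lam"
    and pi_nonneg: "\<And>x. 0 \<le> \<pi> x"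
    and pi_prob: "(\<integral>\<^sup>+x. ennreal (\<pi> x) \<partial>lam) = 1"
    and d_ge: "2 \<le> d"
    and Xs_meas: "\<And>i. i < d \<Longrightarrow> Xs i \<in> sets borel"
    and Xs_disj: "\<And>i j. i < d \<Longrightarrow> j < d \<Longrightarrow> i \<noteq> j \<Longrightarrow> Xs i \<inter> Xs j = {}"
    and Xs_cover: "(\<Union>i<d. Xs i) = UNIV"
    \<comment> \<open>(A1)\<close>
    and A1_inf: "\<exists>c>0. \<forall>x. c \<le> \<pi> x"
    and A1_sup: "\<exists>C. \<forall>x. \<pi> x \<le> C"
    and A1_theta: "\<And>i. i < d \<Longrightarrow> 0 < theta_star lam \<pi> Xs i"
    \<comment> \<open>(A2): symmetric proposal density q w.r.t. lam, bounded below\<close>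
    and q_meas: "case_prod q \<in> borel_measurable (lam \<Otimes>\<^sub>M lam)"
    and q_nonneg: "\<And>x y. 0 \<le> q x y"
    and q_dens: "\<And>x. (\<integral>\<^sup>+y. ennreal (q x y) \<partial>lam) = 1"
    and q_sym: "\<And>x y. q x y = q y x"
    and q_inf: "\<exists>c>0. \<forall>x y. c \<le> q x y"
    \<comment> \<open>step sizes gamma_n, n >= 1\<close>
    and gamma_range: "\<And>n. 1 \<le> n \<Longrightarrow> 0 \<le> \<gamma> n \<and> \<gamma> n < 1"
    and gamma_mono: "\<And>n. 1 \<le> n \<Longrightarrow> \<gamma> (Suc n) \<le> \<gamma> n"
    and gamma_lim: "\<gamma> \<longlonglongrightarrow> 0"
    and gamma_sq: "summable (\<lambda>n. (\<gamma> n)\<^sup>2)"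
    \<comment> \<open>linearized Wang--Landau algorithm\<close>
    and M_prob: "prob_space M"
    and X_meas: "\<And>n. X n \<in> M \<rightarrow>\<^sub>M lam"
    and theta0_meas: "\<And>i. i < d \<Longrightarrow> (\<lambda>\<omega>. \<theta> 0 \<omega> i) \<in> borel_measurable M"
    and theta0_in: "\<And>\<omega>. \<omega> \<in> space M \<Longrightarrow> \<theta> 0 \<omega> \<in> Theta d"
    and X_law: "\<And>n A. A \<in> sets lam \<Longrightarrow>
        AE \<omega> in M. real_cond_exp M (wl_filtration M d X (\<theta> 0) n)
                       (\<lambda>\<omega>'. indicator A (X (Suc n) \<omega>')) \<omega>
                   = mh_op d lam \<pi> Xs q (\<theta> n \<omega>) (indicator A) (X n \<omega>)"
    and theta_update: "\<And>n \<omega> i. \<omega> \<in> space M \<Longrightarrow> i < d \<Longrightarrow>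
        \<theta> (Suc n) \<omega> i = \<theta> n \<omega> i + \<gamma> (Suc n) * H_wl d Xs i (X (Suc n) \<omega>) (\<theta> n \<omega>)"
  shows "AE \<omega> in M.
     (\<forall>n. tv_dist (density lam (\<lambda>x. ennreal (pi_theta d lam \<pi> Xs (\<theta> n \<omega>) x)))
                  (density lam (\<lambda>x. ennreal (pi_theta d lam \<pi> Xs (\<theta> (Suc n) \<omega>) x)))
          \<le> 2 * real d * (real d - 1) * \<gamma> (Suc n))
   \<and> (\<forall>N n. N \<le> n \<longrightarrow>
        (SUP x\<in>UNIV. tv_kernel lam (mh_op d lam \<pi> Xs q (\<theta> n \<omega>))
                                    (mh_op d lam \<pi> Xs q (\<theta> (Suc n) \<omega>)) x)
          \<le> 4 * (1 + 1 / (1 - (SUP j\<in>{N..}. \<gamma> (Suc j)))) * \<gamma> (Suc n))"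
proof -
  have model: "wl_model d Xs lam \<pi> q"
    by (rule wl_model_if_densities) (fact assms)+
  have path: "wl_path d Xs lam \<pi> q \<gamma> (\<lambda>n. \<theta> n \<omega>) (\<lambda>n. X n \<omega>)" if "\<omega> \<in> space M" for \<omega>
    using theta0_in[OF that] gamma_range theta_update[OF that]
    by (intro wl_path.intro[OF model] wl_path_axioms.intro) auto
  have gamma_tail: "\<gamma> (Suc n) \<le> \<gamma> (Suc N)" "(SUP j\<in>{N..}. \<gamma> (Suc j)) = \<gamma> (Suc N)" if "N \<le> n" for N n
    using le_if_decreasing_from[of N "\<lambda>j. \<gamma> (Suc j)"] SUP_atLeast_eq_if_decreasing[of N "\<lambda>j. \<gamma> (Suc j)"]
      gamma_mono that by auto
  have "4 \<le> 2 * real d * (real d - 1)"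
    using d_ge mult_mono[of 2 "real d" 1 "real d - 1"] by simp
  show ?thesis
  proof (rule AE_I2, safe)
    fix \<omega> n assume "\<omega> \<in> space M"
    then interpret P: wl_path d Xs lam \<pi> q \<gamma> "\<lambda>n. \<theta> n \<omega>" "\<lambda>n. X n \<omega>"
      by (rule path)
    show "tv_dist (density lam (\<lambda>x. ennreal (pi_theta d lam \<pi> Xs (\<theta> n \<omega>) x)))
        (density lam (\<lambda>x. ennreal (pi_theta d lam \<pi> Xs (\<theta> (Suc n) \<omega>) x)))
      \<le> 2 * real d * (real d - 1) * \<gamma> (Suc n)"
      using P.tv_dist_pi_theta_Suc_le[of n]
        mult_right_mono[OF \<open>4 \<le> _\<close> conjunct1[OF P.gamma_range[of n]]]
      by linarith
  next
    fix \<omega> and N n :: nat assume "\<omega> \<in> space M" "N \<le> n"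
    then interpret P: wl_path d Xs lam \<pi> q \<gamma> "\<lambda>n. \<theta> n \<omega>" "\<lambda>n. X n \<omega>"
      by (intro path)
    have "(SUP x\<in>UNIV. tv_kernel lam (mh_op d lam \<pi> Xs q (\<theta> n \<omega>))
        (mh_op d lam \<pi> Xs q (\<theta> (Suc n) \<omega>)) x) \<le> 4 * (\<gamma> (Suc n) / (1 - \<gamma> (Suc n)))"
      using P.SUP_tv_kernel_mh_Suc_le[of n] by simp
    also have "\<dots> \<le> 4 * ((1 + 1 / (1 - \<gamma> (Suc N))) * \<gamma> (Suc n))"
      using P.gamma_range[of n] P.gamma_range[of N] gamma_tail(1)[OF \<open>N \<le> n\<close>]
      by (intro mult_left_mono divide_1_minus_le) auto
    finally show "(SUP x\<in>UNIV. tv_kernel lam (mh_op d lam \<pi> Xs q (\<theta> n \<omega>))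
        (mh_op d lam \<pi> Xs q (\<theta> (Suc n) \<omega>)) x)
      \<le> 4 * (1 + 1 / (1 - (SUP j\<in>{N..}. \<gamma> (Suc j)))) * \<gamma> (Suc n)"
      unfolding gamma_tail(2)[OF \<open>N \<le> n\<close>] mult.assoc .
  qed
qed

end
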